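(* Let $R$ be a discrete $\Gamma$-ring, $r\in R[2]$ a formal difference law, $n\ge0$, and $f:[2^n]\to[k]$ a pointed map with $f(\pm1_n)=(n_1,\dots,n_k)\in H\mathbb Z[k]$. Let $S\subseteq\{1,\dots,2^n\}$ be a subset such that for each $m\in\{1,\dots,k\}$ the set $S\cap f^{-1}(m)$ consists of exactly $|n_m|$ elements, all of which carry the sign of $n_m$ in $\pm1_n$ (i.e. lie in $A_+$ if $n_m>0$ and in $A_-$ if $n_m<0$). Let $g:[2^n]\to[k]$ be the pointed map which agrees with $f$ on $S$ and sends all other elements to $0$. Then $f(r^n)=g(r^n)$ in $R[k]$.
   Context: Let $[n]=\{0,1,\dots,n\}$, pointed at $0$. A $\Gamma$-space is a functor $F$ from the finite pointed sets $[n]$ (with pointed maps) to pointed simplicial sets with $F[0]$ a point; for a pointed map $f$ we write $f$ also for $F(f)$; $\Sigma_n$ acts on $F[n]$ via permutations of $\{1,\dots,n\}$. We identify $[n]\wedge[m]$ with $[nm]$ via $i\wedge j\mapsto (j-1)n+i$. A $\Gamma$-ring is a $\Gamma$-space $R$ with unit $1\in R[1]$ and associative unital multiplication given by natural maps $R(K)\wedge R(L)\to R(K\wedge L)$, $p\wedge q\mapsto pq$; it is discrete if all $R(K)$ are sets; $0\in R[1]$ denotes the basepoint. For $x\in R[2]$, $x^k\in R[2^k]$ is the $k$-fold product. Maps: $p^n_i:[n]\to[n-1]$, $p^n_i(j)=j$ ($j<i$), $p^n_i(i)=0$, $p^n_i(j)=j-1$ ($j>i$); for $1\le i<j\le n$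 and $1\le k\le n-1$, $s^n_{i,j,k}:[n]\to[n-1]$ sends $0\mapsto0$, $i,j\mapsto k$, and the remaining elements order-preservingly and bijectively onto $\{1,\dots,n-1\}\setminus\{k\}$; $d^n_j:[n-1]\to[n]$ is the order-preserving injection missing $j$. $H\mathbb{Z}(K)$ is the reduced free abelian group on $K$ (so $H\mathbb Z[k]=\mathbb Z^k$), pointed maps acting by summing coefficients along fibres, with multiplication $(\sum a_k k)(\sum b_l l)=\sum a_kb_l (k\wedge l)$; $\pm1_n=(1,-1)^n\in H\mathbb{Z}[2^n]$. For $k\ge1$, split $\{1,\dots,2^k\}=A_+\sqcup A_-$ where $i\in A_+$ iff the binary expansion of $i-1$ has an even number of digits $1$; $\pm1_k$ has entry $+1$ on $A_+$ and $-1$ on $A_-$. The special action of $\Sigma_{2^{k-1}}\times\Sigma_{2^{k-1}}$ on $F[2^k]$ is the action of the group of permutations of $\{1,\dots,2^k\}$ preserving $A_+$ and $A_-$. Let $\sigma$ be the nontrivial element of $\Sigma_2$. A formal difference law in $R$ is $r\in R[2]$ such that: (1) $p^2_2(r)=1$ and $s^2_{1,2,1}(r)=0$; (2) $p^2_1(r)\,r=r\,p^2_1(r)=\sigma(r)$ in $R[2]$; (3) for every $k\ge1$, $r^k$ is fixed under the special action; (4) for every $k\ge1$, all $1\le i<j\le 2^k$ with one of $i,j$ in $A_+$ and the other in $A_-$, and all $1\le l\le 2^k-1$: $s^{2^k}_{i,j,l}(r^k)=d^{2^k-1}_l\,p^{2^k-1}_i\,p^{2^k}_j(r^k)$. *)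

theory Defs
  imports Main
begin

text \<open>A pointed map [n] -> [m] is represented by a function nat => nat that
  sends 0 to 0 and {0..n} into {0..m}; values outside {0..n} are irrelevant
  (the Gamma-space axioms below require the action to depend only on them).\<close>

definition pmap :: "nat \<Rightarrow> nat \<Rightarrow> (nat \<Rightarrow> nat) \<Rightarrow> bool" where
  "pmap n m f \<longleftrightarrow> f 0 = 0 \<and> (\<forall>i\<le>n. f i \<le> m)"

text \<open>Smash product of pointed maps f:[n]->[m], g:[n']->[m'], using the
  identification [n] smash [n'] = [n n'] via i smash j |-> (j-1) n + i.\<close>

definition smash_map :: "nat \<Rightarrow> nat \<Rightarrow> (nat \<Rightarrow> nat) \<Rightarrow> (nat \<Rightarrow> nat) \<Rightarrow> nat \<Rightarrow> nat" where
  "smash_map n m f g x =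
     (if x = 0 then 0
      else (let i = (x - 1) mod n + 1; j = (x - 1) div n + 1 in
            if f i = 0 \<or> g j = 0 then 0 else (g j - 1) * m + f i))"

record 'a gamma_ring =
  carr :: "nat \<Rightarrow> 'a set"                          (* R[n] *)
  base :: "nat \<Rightarrow> 'a"
  act  :: "nat \<Rightarrow> nat \<Rightarrow> (nat \<Rightarrow> nat) \<Rightarrow> 'a \<Rightarrow> 'a"   (* R(f) : R[n] -> R[m] *)
  one  :: 'a                                      (* unit in R[1] *)
  mul  :: "nat \<Rightarrow> nat \<Rightarrow> 'a \<Rightarrow> 'a \<Rightarrow> 'a"          (* R[n] smash R[m] -> R[n m] *)

definition discrete_gamma_space :: "'a gamma_ring \<Rightarrow> bool" where
  "discrete_gamma_space R \<longleftrightarrow>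
     (\<forall>n. base R n \<in> carr R n) \<and>
     carr R 0 = {base R 0} \<and>
     (\<forall>n m f x. pmap n m f \<longrightarrow> x \<in> carr R n \<longrightarrow> act R n m f x \<in> carr R m) \<and>
     (\<forall>n m f. pmap n m f \<longrightarrow> act R n m f (base R n) = base R m) \<and>
     (\<forall>n m f f' x. pmap n m f \<longrightarrow> (\<forall>i\<le>n. f i = f' i) \<longrightarrow> x \<in> carr R n \<longrightarrow>
        act R n m f x = act R n m f' x) \<and>
     (\<forall>n x. x \<in> carr R n \<longrightarrow> act R n n id x = x) \<and>
     (\<forall>n m l f g x. pmap n m f \<longrightarrow> pmap m l g \<longrightarrow> x \<in> carr R n \<longrightarrow>
        act R n l (g \<circ> f) x = act R m l g (act R n m f x))"

definition discrete_gamma_ring :: "'a gamma_ring \<Rightarrow> bool" where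
  "discrete_gamma_ring R \<longleftrightarrow>
     discrete_gamma_space R \<and>
     one R \<in> carr R 1 \<and>
     (\<forall>n m x y. x \<in> carr R n \<longrightarrow> y \<in> carr R m \<longrightarrow> mul R n m x y \<in> carr R (n * m)) \<and>
     (\<forall>n m y. y \<in> carr R m \<longrightarrow> mul R n m (base R n) y = base R (n * m)) \<and>
     (\<forall>n m x. x \<in> carr R n \<longrightarrow> mul R n m x (base R m) = base R (n * m)) \<and>
     (\<forall>n n' m m' f g x y. pmap n n' f \<longrightarrow> pmap m m' g \<longrightarrow>
        x \<in> carr R n \<longrightarrow> y \<in> carr R m \<longrightarrow>
        mul R n' m' (act R n n' f x) (act R m m' g y)
          = act R (n * m) (n' * m') (smash_map n n' f g) (mul R n m x y)) \<and>
     (\<forall>n m l x y z. x \<in> carr R n \<longrightarrow> y \<in> carr R m \<longrightarrow> z \<in> carr R l \<longrightarrow>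
        mul R (n * m) l (mul R n m x y) z = mul R n (m * l) x (mul R m l y z)) \<and>
     (\<forall>n x. x \<in> carr R n \<longrightarrow> mul R 1 n (one R) x = x \<and> mul R n 1 x (one R) = x)"

primrec gpow :: "'a gamma_ring \<Rightarrow> 'a \<Rightarrow> nat \<Rightarrow> 'a" where
  "gpow R x 0 = one R"
| "gpow R x (Suc k) = mul R (2 ^ k) 2 (gpow R x k) x"

definition p_map :: "nat \<Rightarrow> nat \<Rightarrow> nat" where
  "p_map i j = (if j < i then j else if j = i then 0 else j - 1)"

text \<open>s^n_{i,j,k}: 0 |-> 0, i,j |-> k, the other elements (rank t among
  {1..n} minus {i,j}) go order-preservingly onto {1..n-1} minus {k}.\<close>

definition s_map :: "nat \<Rightarrow> nat \<Rightarrow> nat \<Rightarrow> nat \<Rightarrow> nat \<Rightarrow> nat" where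
  "s_map n i j k x =
     (if x = 0 then 0
      else if x = i \<or> x = j then k
      else (let t = x - card {y \<in> {i, j}. y < x} in if t < k then t else t + 1))"

definition d_map :: "nat \<Rightarrow> nat \<Rightarrow> nat" where
  "d_map j x = (if x < j then x else x + 1)"

definition swap2 :: "nat \<Rightarrow> nat" where
  "swap2 x = (if x = 1 then 2 else if x = 2 then 1 else x)"

fun bitcount :: "nat \<Rightarrow> nat" where
  "bitcount n = (if n = 0 then 0 else n mod 2 + bitcount (n div 2))"

definition A_plus :: "nat \<Rightarrow> nat set" where
  "A_plus k = {i \<in> {1..2 ^ k}. even (bitcount (i - 1))}"

definition A_minus :: "nat \<Rightarrow> nat set" where
  "A_minus k = {i \<in> {1..2 ^ k}. odd (bitcount (i - 1))}"

definition special_perm :: "nat \<Rightarrow> (nat \<Rightarrow> nat) \<Rightarrow> bool" where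
  "special_perm k \<pi> \<longleftrightarrow> \<pi> 0 = 0 \<and> bij_betw \<pi> {1..2 ^ k} {1..2 ^ k} \<and>
     \<pi> ` A_plus k = A_plus k \<and> \<pi> ` A_minus k = A_minus k"

text \<open>Coefficients of +-1_n in HZ[2^n] = Z^(2^n): +1 on A_+, -1 on A_-.\<close>

definition pm_one :: "nat \<Rightarrow> nat \<Rightarrow> int" where
  "pm_one n i = (if i \<in> A_plus n then 1 else if i \<in> A_minus n then -1 else 0)"

definition HZ_act :: "nat \<Rightarrow> (nat \<Rightarrow> nat) \<Rightarrow> (nat \<Rightarrow> int) \<Rightarrow> nat \<Rightarrow> int" where
  "HZ_act N f v m = (\<Sum>i\<in>{i \<in> {1..N}. f i = m}. v i)"

definition formal_difference_law :: "'a gamma_ring \<Rightarrow> 'a \<Rightarrow> bool" where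
  "formal_difference_law R r \<longleftrightarrow>
     r \<in> carr R 2 \<and>
     act R 2 1 (p_map 2) r = one R \<and>
     act R 2 1 (s_map 2 1 2 1) r = base R 1 \<and>
     mul R 1 2 (act R 2 1 (p_map 1) r) r = act R 2 2 swap2 r \<and>
     mul R 2 1 r (act R 2 1 (p_map 1) r) = act R 2 2 swap2 r \<and>
     (\<forall>k\<ge>1. \<forall>\<pi>. special_perm k \<pi> \<longrightarrow>
        act R (2 ^ k) (2 ^ k) \<pi> (gpow R r k) = gpow R r k) \<and>
     (\<forall>k\<ge>1. \<forall>i j l. 1 \<le> i \<longrightarrow> i < j \<longrightarrow> j \<le> 2 ^ k \<longrightarrow>
        ((i \<in> A_plus k \<and> j \<in> A_minus k) \<or> (i \<in> A_minus k \<and> j \<in> A_plus k)) \<longrightarrow>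
        1 \<le> l \<longrightarrow> l \<le> 2 ^ k - 1 \<longrightarrow>
        act R (2 ^ k) (2 ^ k - 1) (s_map (2 ^ k) i j l) (gpow R r k)
          = act R (2 ^ k - 2) (2 ^ k - 1) (d_map l)
              (act R (2 ^ k - 1) (2 ^ k - 2) (p_map i)
                 (act R (2 ^ k) (2 ^ k - 1) (p_map j) (gpow R r k))))"

end

theory Submission
  imports Defs
begin

(* The power r^n in R[2^n] is cancellative: if a pointed map h : [2^n] -> [k]
   sends a point i of A_+ and a point j of A_- to the same value, then h(r^n) does not
   change when i and j are sent to the basepoint instead.  This is axiom (4) of a formal
   difference law with l = 1: h factors as h' o s_{i,j,1}, and s_{i,j,1}(r^n) equals
   d_1 p_i p_j (r^n), where h' o d_1 o p_i o p_j is h with i and j collapsed to 0.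
   Call h balanced off S if for every m <> 0 the fibre h^{-1}(m) minus S has as many points
   in A_+ as in A_-.  Cancelling such pairs one at a time (induction on the size of the
   support of h outside S) shows that a balanced h satisfies h(r^n) = h|_S(r^n).
   The theorem follows because its hypotheses say exactly that f is balanced off S: the
   m-th coefficient of f(+-1_n) is #(fibre in A_+) - #(fibre in A_-), and S takes away
   |n_m| points of the majority sign from that fibre. *)

lemma act_carr:
  assumes "discrete_gamma_space R" "pmap n m f" "x \<in> carr R n"
  shows "act R n m f x \<in> carr R m"
  using assms unfolding discrete_gamma_space_def by blast

lemma act_cong:
  assumes "discrete_gamma_space R" "pmap n m f" "\<And>i. i \<le> n \<Longrightarrow> f i = f' i" "x \<in> carr R n"
  shows "act R n m f x = act R n m f' x"
  using assms unfolding discrete_gamma_space_def by blast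

lemma act_comp:
  assumes "discrete_gamma_space R" "pmap n m f" "pmap m l g" "x \<in> carr R n"
  shows "act R n l (g \<circ> f) x = act R m l g (act R n m f x)"
  using assms unfolding discrete_gamma_space_def by blast

lemma pmap_comp: "pmap n m f \<Longrightarrow> pmap m l g \<Longrightarrow> pmap n l (g \<circ> f)"
  by (auto simp: pmap_def)

lemma gpow_carr:
  assumes "discrete_gamma_ring R" "r \<in> carr R 2"
  shows "gpow R r n \<in> carr R (2 ^ n)"
proof (induction n)
  case 0
  then show ?case using assms by (simp add: discrete_gamma_ring_def)
next
  case (Suc n)
  have "mul R (2 ^ n) 2 (gpow R r n) r \<in> carr R (2 ^ n * 2)"
    using assms Suc by (simp add: discrete_gamma_ring_def)
  then show ?case by (simp add: mult.commute)
qed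

text \<open>The recursion equation of bitcount would unfold forever under the simplifier.\<close>

declare bitcount.simps[simp del]

lemma A_plus_not_minus: "x \<in> A_plus n \<Longrightarrow> x \<notin> A_minus n"
  by (simp add: A_plus_def A_minus_def)

lemma A_plus_or_minus: "x \<in> {1..2 ^ n} \<Longrightarrow> x \<in> A_plus n \<or> x \<in> A_minus n"
  by (auto simp: A_plus_def A_minus_def)

lemma A_plus_range: "A_plus n \<subseteq> {1..2 ^ n}" and A_minus_range: "A_minus n \<subseteq> {1..2 ^ n}"
  by (auto simp: A_plus_def A_minus_def)

lemma finite_A_plus: "finite (A_plus n)" and finite_A_minus: "finite (A_minus n)"
  by (simp_all add: A_plus_def A_minus_def)

section \<open>Cancelling a pair of opposite signs\<close>

lemma s_map_1:
  assumes "1 \<le> i" "i < j"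
  shows "s_map N i j 1 x = (if x = 0 then 0 else if x = i \<or> x = j then 1
           else if x < i then x + 1 else if x < j then x else x - 1)"
proof -
  have "{y \<in> {i, j}. y < x} = (if x \<le> i then {} else if x \<le> j then {i} else {i, j})"
    using assms by auto
  then have "card {y \<in> {i, j}. y < x} = (if x \<le> i then 0 else if x \<le> j then 1 else 2)"
    using assms by auto
  then show ?thesis
    unfolding s_map_def Let_def using assms by auto
qed

lemma collapse_factorisation:
  assumes h: "pmap N k h" and ij: "1 \<le> i" "i < j" "j \<le> N" and hij: "h i = h j"
  obtains h' where "pmap (N - 1) k h'" "h = h' \<circ> s_map N i j 1"
    "h' \<circ> d_map 1 \<circ> p_map i \<circ> p_map j = h(i := 0, j := 0)"
proof
  define h' where "h' y = (if y = 0 then 0 else if y = 1 then h i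
      else h (if y - 1 < i then y - 1 else if y < j then y else y + 1))" for y
  have h0: "h 0 = 0" using h by (simp add: pmap_def)
  show "pmap (N - 1) k h'"
    using h ij unfolding pmap_def h'_def by auto
  show fac: "h = h' \<circ> s_map N i j 1"
    unfolding fun_eq_iff comp_def s_map_1[OF ij(1,2)] h'_def using ij hij h0 by auto
  show "h' \<circ> d_map 1 \<circ> p_map i \<circ> p_map j = h(i := 0, j := 0)"
  proof
    fix x
    show "(h' \<circ> d_map 1 \<circ> p_map i \<circ> p_map j) x = (h(i := 0, j := 0)) x"
    proof (cases "x = i \<or> x = j")
      case True
      then show ?thesis using ij by (auto simp: h'_def d_map_def p_map_def)
    next
      case False
      then have "d_map 1 (p_map i (p_map j x)) = s_map N i j 1 x"
        unfolding s_map_1[OF ij(1,2)] d_map_def p_map_def using ij by auto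
      moreover have "h x = h' (s_map N i j 1 x)" using fac by (metis comp_apply)
      ultimately show ?thesis using False by simp
    qed
  qed
qed

text \<open>Axiom (4) with l = 1 for i < j of opposite signs, pulled back along h.\<close>

lemma cancel_ordered_pair:
  assumes R: "discrete_gamma_ring R" and r: "formal_difference_law R r"
    and h: "pmap (2 ^ n) k h" and ij: "1 \<le> i" "i < j" "j \<le> 2 ^ n"
    and signs: "(i \<in> A_plus n \<and> j \<in> A_minus n) \<or> (i \<in> A_minus n \<and> j \<in> A_plus n)"
    and hij: "h i = h j"
  shows "act R (2 ^ n) k h (gpow R r n) = act R (2 ^ n) k (h(i := 0, j := 0)) (gpow R r n)"
proof -
  define N where "N = (2::nat) ^ n"
  define X where "X = gpow R r n"
  have G: "discrete_gamma_space R" using R by (simp add: discrete_gamma_ring_def)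
  have X: "X \<in> carr R N"
    using gpow_carr[OF R] r by (simp add: X_def N_def formal_difference_law_def)
  have "n \<ge> 1" using ij by (cases n) auto
  then have law: "act R N (N - 1) (s_map N i j 1) X
      = act R (N - 2) (N - 1) (d_map 1) (act R (N - 1) (N - 2) (p_map i)
          (act R N (N - 1) (p_map j) X))"
    using r ij signs unfolding formal_difference_law_def N_def X_def by auto
  obtain h' where h': "pmap (N - 1) k h'" and fac: "h = h' \<circ> s_map N i j 1"
    and col: "h' \<circ> d_map 1 \<circ> p_map i \<circ> p_map j = h(i := 0, j := 0)"
    using collapse_factorisation h ij hij unfolding N_def by blast
  have ps: "pmap N (N - 1) (s_map N i j 1)"
    using ij unfolding N_def pmap_def s_map_1[OF ij(1,2)] by auto
  have pj: "pmap N (N - 1) (p_map j)" using ij by (auto simp: pmap_def p_map_def N_def)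
  have pi: "pmap (N - 1) (N - 2) (p_map i)" using ij by (auto simp: pmap_def p_map_def N_def)
  have pd: "pmap (N - 2) (N - 1) (d_map 1)" using ij by (auto simp: pmap_def d_map_def N_def)
  have Xj: "act R N (N - 1) (p_map j) X \<in> carr R (N - 1)" using act_carr[OF G pj X] .
  have Xij: "act R (N - 1) (N - 2) (p_map i) (act R N (N - 1) (p_map j) X) \<in> carr R (N - 2)"
    using act_carr[OF G pi Xj] .
  have "act R N k h X = act R (N - 1) k h' (act R N (N - 1) (s_map N i j 1) X)"
    unfolding fac by (rule act_comp[OF G ps h' X])
  also have "\<dots> = act R (N - 2) k (h' \<circ> d_map 1)
      (act R (N - 1) (N - 2) (p_map i) (act R N (N - 1) (p_map j) X))"
    unfolding law by (rule act_comp[OF G pd h' Xij, symmetric])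
  also have "\<dots> = act R (N - 1) k (h' \<circ> d_map 1 \<circ> p_map i) (act R N (N - 1) (p_map j) X)"
    by (rule act_comp[OF G pi pmap_comp[OF pd h'] Xj, symmetric])
  also have "\<dots> = act R N k (h' \<circ> d_map 1 \<circ> p_map i \<circ> p_map j) X"
    by (rule act_comp[OF G pj pmap_comp[OF pi pmap_comp[OF pd h']] X, symmetric])
  finally show ?thesis unfolding col N_def X_def .
qed

lemma cancel_pair:
  assumes R: "discrete_gamma_ring R" and r: "formal_difference_law R r"
    and h: "pmap (2 ^ n) k h" and i: "i \<in> A_plus n" and j: "j \<in> A_minus n"
    and hij: "h i = h j"
  shows "act R (2 ^ n) k h (gpow R r n) = act R (2 ^ n) k (h(i := 0, j := 0)) (gpow R r n)"
proof -
  have "i \<noteq> j" using i j A_plus_not_minus by blast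
  moreover have "1 \<le> i" "i \<le> 2 ^ n" "1 \<le> j" "j \<le> 2 ^ n"
    using subsetD[OF A_plus_range i] subsetD[OF A_minus_range j] by auto
  ultimately consider "i < j" | "j < i" by linarith
  then show ?thesis
  proof cases
    case 1
    then show ?thesis using cancel_ordered_pair[OF R r h] i j hij \<open>1 \<le> i\<close> \<open>j \<le> 2 ^ n\<close>
      by blast
  next
    case 2
    then have "act R (2 ^ n) k h (gpow R r n)
        = act R (2 ^ n) k (h(j := 0, i := 0)) (gpow R r n)"
      using cancel_ordered_pair[OF R r h] i j hij \<open>1 \<le> j\<close> \<open>i \<le> 2 ^ n\<close> by simp
    then show ?thesis using \<open>i \<noteq> j\<close> by (simp add: fun_upd_twist)
  qed
qed

section \<open>Maps balanced off S\<close>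

definition balanced_off :: "nat \<Rightarrow> nat set \<Rightarrow> (nat \<Rightarrow> nat) \<Rightarrow> bool" where
  "balanced_off n S h \<longleftrightarrow> (\<forall>m. m \<noteq> 0 \<longrightarrow>
     card {x \<in> A_plus n. x \<notin> S \<and> h x = m} = card {x \<in> A_minus n. x \<notin> S \<and> h x = m})"

lemma balanced_off_pair:
  assumes bal: "balanced_off n S h" and x: "x \<in> {1..2 ^ n}" "x \<notin> S" "h x \<noteq> 0"
  obtains i j where "i \<in> A_plus n" "j \<in> A_minus n" "i \<notin> S" "j \<notin> S" "h i = h x" "h j = h x"
proof -
  define P where "P = {y \<in> A_plus n. y \<notin> S \<and> h y = h x}"
  define M where "M = {y \<in> A_minus n. y \<notin> S \<and> h y = h x}"
  have "card P = card M" using bal x unfolding balanced_off_def P_def M_def by blast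
  moreover have "finite P" "finite M"
    unfolding P_def M_def using finite_A_plus finite_A_minus by auto
  moreover have "P \<noteq> {} \<or> M \<noteq> {}"
    using x A_plus_or_minus[of x n] unfolding P_def M_def by auto
  ultimately have "P \<noteq> {}" "M \<noteq> {}" by (metis card_0_eq)+
  then show ?thesis using that unfolding P_def M_def by blast
qed

lemma balanced_off_cancel:
  assumes bal: "balanced_off n S h" and i: "i \<in> A_plus n" "i \<notin> S"
    and j: "j \<in> A_minus n" "j \<notin> S" and hij: "h i = h j"
  shows "balanced_off n S (h(i := 0, j := 0))"
  unfolding balanced_off_def
proof (intro allI impI)
  fix m :: nat assume m: "m \<noteq> 0"
  define P where "P = {x \<in> A_plus n. x \<notin> S \<and> h x = m}"
  define M where "M = {x \<in> A_minus n. x \<notin> S \<and> h x = m}"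
  have "{x \<in> A_plus n. x \<notin> S \<and> (h(i := 0, j := 0)) x = m} = P - {i}"
    using m j A_plus_not_minus unfolding P_def by auto
  moreover have "{x \<in> A_minus n. x \<notin> S \<and> (h(i := 0, j := 0)) x = m} = M - {j}"
    using m i A_plus_not_minus unfolding M_def by auto
  moreover have "i \<in> P \<longleftrightarrow> j \<in> M" using i j hij unfolding P_def M_def by auto
  moreover have "card P = card M" using bal m unfolding balanced_off_def P_def M_def by blast
  ultimately show "card {x \<in> A_plus n. x \<notin> S \<and> (h(i := 0, j := 0)) x = m}
      = card {x \<in> A_minus n. x \<notin> S \<and> (h(i := 0, j := 0)) x = m}"
    by (simp add: card_Diff_singleton_if)
qed

lemma balanced_off_restrict:
  assumes R: "discrete_gamma_ring R" and r: "formal_difference_law R r"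
    and h: "pmap (2 ^ n) k h" and bal: "balanced_off n S h"
  shows "act R (2 ^ n) k h (gpow R r n)
       = act R (2 ^ n) k (\<lambda>i. if i \<in> S then h i else 0) (gpow R r n)"
  using h bal
proof (induction "card {x \<in> {1..2 ^ n}. x \<notin> S \<and> h x \<noteq> 0}" arbitrary: h rule: less_induct)
  case less
  define T where "T = {x \<in> {1..2 ^ n}. x \<notin> S \<and> h x \<noteq> 0}"
  show ?case
  proof (cases "T = {}")
    case True
    have G: "discrete_gamma_space R" using R by (simp add: discrete_gamma_ring_def)
    have X: "gpow R r n \<in> carr R (2 ^ n)"
      using gpow_carr[OF R] r by (simp add: formal_difference_law_def)
    have "h x = (if x \<in> S then h x else 0)" if "x \<le> 2 ^ n" for x
      using True that less.prems(1) unfolding T_def pmap_def by (cases "x = 0") auto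
    then show ?thesis by (rule act_cong[OF G less.prems(1) _ X])
  next
    case False
    then obtain x where x: "x \<in> {1..2 ^ n}" "x \<notin> S" "h x \<noteq> 0" unfolding T_def by blast
    obtain i j where i: "i \<in> A_plus n" "i \<notin> S" and j: "j \<in> A_minus n" "j \<notin> S"
      and hij: "h i = h x" "h j = h x"
      using balanced_off_pair[OF less.prems(2) x] by blast
    define h' where "h' = h(i := 0, j := 0)"
    have support: "{y \<in> {1..2 ^ n}. y \<notin> S \<and> h' y \<noteq> 0} = T - {i, j}"
      unfolding T_def h'_def by auto
    have "i \<in> T"
      using subsetD[OF A_plus_range i(1)] i(2) hij x(3) unfolding T_def by auto
    then have "T - {i, j} \<subset> T" by blast
    then have smaller: "card {y \<in> {1..2 ^ n}. y \<notin> S \<and> h' y \<noteq> 0} < card T"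
      unfolding support by (rule psubset_card_mono[rotated]) (simp add: T_def)
    have "pmap (2 ^ n) k h'" using less.prems(1) unfolding pmap_def h'_def by auto
    moreover have "balanced_off n S h'"
      unfolding h'_def using balanced_off_cancel[OF less.prems(2) i j] hij by simp
    ultimately have "act R (2 ^ n) k h' (gpow R r n)
        = act R (2 ^ n) k (\<lambda>y. if y \<in> S then h' y else 0) (gpow R r n)"
      using less smaller unfolding T_def by blast
    moreover have "(\<lambda>y. if y \<in> S then h' y else 0) = (\<lambda>y. if y \<in> S then h y else 0)"
      using i j unfolding h'_def by auto
    moreover have "act R (2 ^ n) k h (gpow R r n) = act R (2 ^ n) k h' (gpow R r n)"
      unfolding h'_def using cancel_pair[OF R r less.prems(1) i(1) j(1)] hij by simp
    ultimately show ?thesis by simp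
  qed
qed

section \<open>The hypotheses of the theorem make f balanced off S\<close>

lemma HZ_act_pm_one:
  "HZ_act (2 ^ n) f (pm_one n) m
     = int (card {x \<in> A_plus n. f x = m}) - int (card {x \<in> A_minus n. f x = m})"
proof -
  define P where "P = {x \<in> A_plus n. f x = m}"
  define M where "M = {x \<in> A_minus n. f x = m}"
  have fibre: "{i \<in> {1..2 ^ n}. f i = m} = P \<union> M"
    unfolding P_def M_def using A_plus_or_minus A_plus_range A_minus_range by blast
  have disj: "P \<inter> M = {}" unfolding P_def M_def using A_plus_not_minus by blast
  have fin: "finite P" "finite M"
    unfolding P_def M_def using finite_A_plus finite_A_minus by auto
  have "sum (pm_one n) P = sum (\<lambda>_. 1) P"
    by (rule sum.cong) (auto simp: P_def pm_one_def)
  moreover have "sum (pm_one n) M = sum (\<lambda>_. -1) M"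
    by (rule sum.cong) (auto simp: M_def pm_one_def dest: A_plus_not_minus)
  ultimately show ?thesis
    unfolding HZ_act_def fibre sum.union_disjoint[OF fin disj] by (simp add: P_def M_def)
qed

lemma card_remove_majority:
  fixes P M SP SM :: "'b set" and d :: int
  assumes fin: "finite P" "finite M" and sub: "SP \<subseteq> P" "SM \<subseteq> M"
    and d: "d = int (card P) - int (card M)" and size: "card SP + card SM = nat \<bar>d\<bar>"
    and pos: "d > 0 \<Longrightarrow> SM = {}" and neg: "d < 0 \<Longrightarrow> SP = {}"
  shows "card (P - SP) = card (M - SM)"
proof -
  have "card (P - SP) = card P - card SP" "card (M - SM) = card M - card SM"
    using card_Diff_subset fin sub by (metis finite_subset)+
  moreover have "card SP \<le> card P" "card SM \<le> card M"
    using card_mono fin sub by blast+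
  moreover have "d > 0 \<Longrightarrow> card SM = 0" "d < 0 \<Longrightarrow> card SP = 0"
    using pos neg by auto
  ultimately show ?thesis using d size by (cases "d > 0"; cases "d < 0") auto
qed

lemma balanced_off_of_coefficients:
  assumes f: "pmap (2 ^ n) k f" and S: "S \<subseteq> {1..2 ^ n}"
    and coeff: "\<forall>m\<in>{1..k}.
           card (S \<inter> {i. f i = m}) = nat \<bar>HZ_act (2 ^ n) f (pm_one n) m\<bar> \<and>
           (\<forall>i \<in> S \<inter> {i. f i = m}.
              (HZ_act (2 ^ n) f (pm_one n) m > 0 \<longrightarrow> i \<in> A_plus n) \<and>
              (HZ_act (2 ^ n) f (pm_one n) m < 0 \<longrightarrow> i \<in> A_minus n))"
  shows "balanced_off n S f"
  unfolding balanced_off_def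
proof (intro allI impI)
  fix m :: nat assume "m \<noteq> 0"
  define P where "P = {x \<in> A_plus n. f x = m}"
  define M where "M = {x \<in> A_minus n. f x = m}"
  have outside: "{x \<in> A_plus n. x \<notin> S \<and> f x = m} = P - S \<inter> P"
    "{x \<in> A_minus n. x \<notin> S \<and> f x = m} = M - S \<inter> M"
    unfolding P_def M_def by auto
  show "card {x \<in> A_plus n. x \<notin> S \<and> f x = m} = card {x \<in> A_minus n. x \<notin> S \<and> f x = m}"
  proof (cases "m \<le> k")
    case False
    then have "P = {}" "M = {}"
      using f subsetD[OF A_plus_range] subsetD[OF A_minus_range]
      unfolding P_def M_def pmap_def by fastforce+
    then show ?thesis unfolding outside by simp
  next
    case True
    define d where "d = HZ_act (2 ^ n) f (pm_one n) m"
    have m: "m \<in> {1..k}" using True \<open>m \<noteq> 0\<close> by simp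
    have "S \<inter> {i. f i = m} = S \<inter> P \<union> S \<inter> M"
      unfolding P_def M_def using S A_plus_or_minus by blast
    moreover have "S \<inter> P \<inter> (S \<inter> M) = {}" unfolding P_def M_def using A_plus_not_minus by blast
    moreover have fin: "finite P" "finite M"
      unfolding P_def M_def using finite_A_plus finite_A_minus by auto
    ultimately have "card (S \<inter> {i. f i = m}) = card (S \<inter> P) + card (S \<inter> M)"
      by (simp add: card_Un_disjoint)
    then have size: "card (S \<inter> P) + card (S \<inter> M) = nat \<bar>d\<bar>"
      using coeff m unfolding d_def by simp
    have "d > 0 \<Longrightarrow> S \<inter> M = {}" "d < 0 \<Longrightarrow> S \<inter> P = {}"
      using coeff m A_plus_not_minus unfolding d_def P_def M_def by fastforce+
    moreover have "d = int (card P) - int (card M)"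
      unfolding d_def P_def M_def by (rule HZ_act_pm_one)
    ultimately show ?thesis
      unfolding outside using card_remove_majority[OF fin _ _ _ size] by blast
  qed
qed

theorem lemma3p4p1:
  fixes R :: "'a gamma_ring" and r :: 'a and n k :: nat
    and f :: "nat \<Rightarrow> nat" and S :: "nat set"
  assumes "discrete_gamma_ring R"
    and "formal_difference_law R r"
    and "pmap (2 ^ n) k f"
    and "S \<subseteq> {1..2 ^ n}"
    and "\<forall>m\<in>{1..k}.
           card (S \<inter> {i. f i = m}) = nat \<bar>HZ_act (2 ^ n) f (pm_one n) m\<bar> \<and>
           (\<forall>i \<in> S \<inter> {i. f i = m}.
              (HZ_act (2 ^ n) f (pm_one n) m > 0 \<longrightarrow> i \<in> A_plus n) \<and>
              (HZ_act (2 ^ n) f (pm_one n) m < 0 \<longrightarrow> i \<in> A_minus n))"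
  shows "act R (2 ^ n) k f (gpow R r n)
         = act R (2 ^ n) k (\<lambda>i. if i \<in> S then f i else 0) (gpow R r n)"
proof -
  have "balanced_off n S f" using balanced_off_of_coefficients assms(3-5) .
  then show ?thesis by (rule balanced_off_restrict[OF assms(1-3)])
qed

end
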